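(* The polynomial sequences $(G_n(q))_{n\ge1}$ and $(S_n(q))_{n\ge1}$ are $q$-Euler–Gauss sequences, and neither satisfies the $q$-Gauss congruence $\sum_{d\mid n}\mu(d)a_{n/d}(q^d)\equiv 0\pmod{[n]_q}$ at any composite square-free $n$.
   Context: $\Phi_k(q)$ is the $k$-th cyclotomic polynomial, $\mu$ the Möbius function, and $[n]_q=1+q+\dots+q^{n-1}$. For $n>1$ let $s_n$ be the smallest prime factor of $n$ and $g_n$ the greatest prime factor of $n$. Define $S_1(q)=G_1(q)=\Phi_1(q)=q-1$, and for $n>1$, $S_n(q)=\Phi_{s_n}(q^{n/s_n})$ and $G_n(q)=\Phi_{g_n}(q^{n/g_n})$. Congruences of polynomials modulo $[n]_q$ mean divisibility of the difference by $[n]_q$ in $\mathbb{Z}[q]$. A sequence $(a_n(q))$ in $\mathbb{Z}[q]$ is a $q$-Euler–Gauss sequence if for all $n\ge1$, $\prod_{d\mid n,\,\mu(d)=1}a_{n/d}(q^d)\equiv\prod_{d\mid n,\,\mu(d)=-1}a_{n/d}(q^d)\pmod{[n]_q}$. *)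

theory Defs
  imports "HOL-Computational_Algebra.Computational_Algebra"
begin

definition moebius :: "nat \<Rightarrow> int" where
  "moebius n = (if n = 0 \<or> \<not> squarefree n then 0 else (-1) ^ card (prime_factors n))"

text \<open>k-th cyclotomic polynomial via the Moebius product formula
  Phi_k(q) = prod_{d | k} (q^d - 1)^{mu(k/d)} (exact division in Z[q]).\<close>
definition cyclotomic :: "nat \<Rightarrow> int poly" where
  "cyclotomic k =
     (\<Prod>d\<in>{d. d dvd k \<and> moebius (k div d) = 1}. monom 1 d - 1) div
     (\<Prod>d\<in>{d. d dvd k \<and> moebius (k div d) = -1}. monom 1 d - 1)"

definition qint :: "nat \<Rightarrow> int poly" where
  "qint n = (\<Sum>i<n. monom 1 i)"

definition subst_pow :: "int poly \<Rightarrow> nat \<Rightarrow> int poly" where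
  "subst_pow p d = pcompose p (monom 1 d)"

definition S_seq :: "nat \<Rightarrow> int poly" where
  "S_seq n = (if n = 1 then [:-1, 1:]
              else subst_pow (cyclotomic (Min (prime_factors n))) (n div Min (prime_factors n)))"

definition G_seq :: "nat \<Rightarrow> int poly" where
  "G_seq n = (if n = 1 then [:-1, 1:]
              else subst_pow (cyclotomic (Max (prime_factors n))) (n div Max (prime_factors n)))"

definition q_Euler_Gauss :: "(nat \<Rightarrow> int poly) \<Rightarrow> bool" where
  "q_Euler_Gauss a \<longleftrightarrow> (\<forall>n\<ge>1.
     qint n dvd
       ((\<Prod>d\<in>{d. d dvd n \<and> moebius d = 1}. subst_pow (a (n div d)) d) -
        (\<Prod>d\<in>{d. d dvd n \<and> moebius d = -1}. subst_pow (a (n div d)) d)))"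

definition q_Gauss_at :: "(nat \<Rightarrow> int poly) \<Rightarrow> nat \<Rightarrow> bool" where
  "q_Gauss_at a n \<longleftrightarrow>
     qint n dvd (\<Sum>d\<in>{d. d dvd n}. smult (moebius d) (subst_pow (a (n div d)) d))"

end

theory Submission
  imports Defs "HOL-Library.Disjoint_Sets"
begin

text \<open>
  Since Phi_p(q) = [p]_q for a prime p, both sequences have the form a_n(q) = [p]_{q^(n/p)} for a
  prime p = sel(n) dividing n, so the term a_{n/d}(q^d) of the products and sums is [p]_{q^(n/p)}
  with p = sel(n/d) as long as d < n. Multiplying or dividing d by a prime t flips the sign of
  mu(d), and when t^2 divides n it does not change the prime factors of n/d: for non-squarefree n
  the two Euler-Gauss products are equal. For squarefree n one product contains a_1(q^n) = q^n - 1
  and the other contains prod_p [p]_{q^(n/p)}, which [n]_q divides because [m]_q and [k]_q are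
  coprime for coprime m and k. In the q-Gauss sum at a composite squarefree n, toggling the prime t
  that sel never picks in the presence of another prime (the least prime for G, the greatest for S)
  cancels all terms except those for d = n and d = n/t. Modulo [n]_q this leaves +-[t]_{q^(n/t)},
  a nonzero polynomial of degree n - n/t < n - 1.
\<close>

section \<open>Squarefree numbers, the Moebius function and toggling a prime\<close>

lemma squarefree_nat_gt_0: "squarefree (n :: nat) \<Longrightarrow> n > 0"
  by (metis gr0I not_squarefree_0)

lemma squarefree_not_dvd_div_prime:
  fixes d p :: nat
  assumes "squarefree d" "prime p" "p dvd d"
  shows "\<not> p dvd d div p"
proof
  assume "p dvd d div p"
  with assms(3) have "p ^ 2 dvd d"
    by (metis dvd_div_iff_mult dvd_mult_div_cancel mult_dvd_mono dvd_refl power2_eq_square)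
  with assms(1,2) show False
    using not_prime_unit squarefreeD by blast
qed

lemma div_dvd_dividend_nat: "p dvd n \<Longrightarrow> n div p dvd (n :: nat)"
  by (metis dvd_div_mult_self dvd_triv_left)

lemma div_div_self_nat: "p dvd n \<Longrightarrow> n \<noteq> 0 \<Longrightarrow> n div (n div p) = (p :: nat)"
  by (simp add: div_div_eq_right)

lemma prime_factors_nonempty: "(m :: nat) > 1 \<Longrightarrow> prime_factors m \<noteq> {}"
  by (simp add: prime_factorization_empty_iff)

lemma prime_factors_div_eq_insert:
  fixes e p n :: nat
  assumes "prime p" "e * p dvd n" "n \<noteq> 0"
  shows "prime_factors (n div e) = insert p (prime_factors (n div (e * p)))"
proof -
  obtain k where n_eq: "n = e * p * k"
    using assms(2) by blast
  then have "e \<noteq> 0" "k \<noteq> 0"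
    using assms(3) by auto
  then have "n div e = p * k"
    by (simp add: n_eq mult.assoc)
  moreover have "n div (e * p) = k"
    using \<open>e \<noteq> 0\<close> prime_gt_0_nat[OF assms(1)] by (simp add: n_eq)
  ultimately show ?thesis
    using assms(1) \<open>k \<noteq> 0\<close> by (simp add: prime_factors_product prime_prime_factors)
qed

lemma prime_factors_div_eq_if_square_dvd:
  fixes e p n :: nat
  assumes "prime p" "p ^ 2 dvd n" "\<not> p dvd e" "e * p dvd n" "n \<noteq> 0"
  shows "prime_factors (n div e) = prime_factors (n div (e * p))"
proof -
  obtain k where n_eq: "n = e * p * k"
    using assms(4) by blast
  have "p * p dvd p * (e * k)"
    using assms(2) by (simp add: n_eq power2_eq_square ac_simps)
  then have "p dvd k"
    using assms(1,3) prime_gt_0_nat[OF assms(1)] by (simp add: prime_dvd_mult_iff)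
  moreover have "k \<noteq> 0" "e * p \<noteq> 0"
    using assms(5) n_eq by auto
  ultimately have "p \<in> prime_factors (n div (e * p))"
    using assms(1) by (simp add: n_eq in_prime_factors_iff)
  then show ?thesis
    using prime_factors_div_eq_insert[OF assms(1,4,5)] by (simp add: insert_absorb)
qed

lemma moebius_Suc_0 [simp]: "moebius (Suc 0) = 1"
  by (simp add: moebius_def)

lemma moebius_prime: "prime p \<Longrightarrow> moebius p = -1"
  by (simp add: moebius_def squarefree_prime prime_prime_factors)

lemma squarefree_if_moebius_neq_0: "moebius n \<noteq> 0 \<Longrightarrow> squarefree n"
  by (auto simp: moebius_def split: if_splits)

lemma moebius_squarefree: "squarefree n \<Longrightarrow> moebius n = 1 \<or> moebius n = -1"
  using squarefree_nat_gt_0[of n]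
  by (cases "even (card (prime_factors n))") (auto simp: moebius_def)

lemma moebius_mult_prime:
  assumes "squarefree d" "prime p" "\<not> p dvd d"
  shows "moebius (d * p) = - moebius d"
proof -
  have "d \<noteq> 0"
    using assms(1) squarefree_nat_gt_0 by blast
  have "coprime d p"
    using prime_imp_coprime[OF assms(2,3)] by (simp add: coprime_commute)
  with assms(1,2) have "squarefree (d * p)"
    by (simp add: squarefree_mult_coprime squarefree_prime)
  moreover have "prime_factors (d * p) = insert p (prime_factors d)" "p \<notin> prime_factors d"
    using assms \<open>d \<noteq> 0\<close> by (auto simp: prime_factors_product prime_prime_factors)
  ultimately show ?thesis
    using assms \<open>d \<noteq> 0\<close> by (simp add: moebius_def)
qed

lemma moebius_div_prime:
  assumes "squarefree d" "prime p" "p dvd d"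
  shows "moebius (d div p) = - moebius d"
proof -
  have "d = d div p * p"
    using assms(3) by simp
  then have "moebius d = - moebius (d div p)"
    using moebius_mult_prime[of "d div p" p] assms squarefree_not_dvd_div_prime squarefree_mono
    by (metis dvd_triv_left)
  then show ?thesis
    by simp
qed

definition toggle_prime :: "nat \<Rightarrow> nat \<Rightarrow> nat" where
  "toggle_prime p d = (if p dvd d then d div p else d * p)"

lemma toggle_prime_cases:
  assumes "prime p" "squarefree d"
  obtains e where "\<not> p dvd e" "d = e" "toggle_prime p d = e * p"
    | e where "\<not> p dvd e" "d = e * p" "toggle_prime p d = e"
proof (cases "p dvd d")
  case True
  then show ?thesis
    using that(2)[of "d div p"] squarefree_not_dvd_div_prime[OF assms(2,1) True]
    by (simp add: toggle_prime_def)
next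
  case False
  then show ?thesis
    using that(1)[of d] by (simp add: toggle_prime_def)
qed

lemma toggle_prime_toggle_prime:
  assumes "prime p" "squarefree d"
  shows "toggle_prime p (toggle_prime p d) = d"
  using assms prime_gt_0_nat[OF assms(1)]
  by (cases rule: toggle_prime_cases) (auto simp: toggle_prime_def)

lemma moebius_toggle_prime:
  assumes "prime p" "squarefree d"
  shows "moebius (toggle_prime p d) = - moebius d"
  using assms moebius_mult_prime moebius_div_prime by (simp add: toggle_prime_def)

lemma toggle_prime_neq:
  assumes "prime p" "d \<noteq> 0"
  shows "toggle_prime p d \<noteq> d"
  using assms prime_gt_1_nat[OF assms(1)] div_less_dividend[of p d]
  by (auto simp: toggle_prime_def)

lemma toggle_prime_dvd:
  assumes "prime p" "p dvd n" "d dvd n"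
  shows "toggle_prime p d dvd n"
proof (cases "p dvd d")
  case True
  have "d div p dvd n"
    using div_dvd_dividend_nat[OF True] assms(3) by (rule dvd_trans)
  with True show ?thesis
    by (simp add: toggle_prime_def)
next
  case False
  then have "coprime d p"
    using prime_imp_coprime[OF assms(1)] by (simp add: coprime_commute)
  with False assms(2,3) show ?thesis
    by (simp add: toggle_prime_def divides_mult)
qed

lemma toggle_prime_other_divisor:
  fixes n t :: nat
  assumes "prime t" "t dvd n" "squarefree n" "d dvd n" "d \<noteq> n" "d \<noteq> n div t"
  shows "toggle_prime t d dvd n" "toggle_prime t d \<noteq> n" "toggle_prime t d \<noteq> n div t"
proof -
  have "\<not> t dvd n div t"
    using assms(3,1,2) by (rule squarefree_not_dvd_div_prime)
  then have "toggle_prime t n = n div t" "toggle_prime t (n div t) = n"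
    using assms(2) by (simp_all add: toggle_prime_def)
  moreover have "toggle_prime t (toggle_prime t d) = d"
    using assms(1) squarefree_mono[OF assms(4,3)] by (rule toggle_prime_toggle_prime)
  ultimately show "toggle_prime t d \<noteq> n" "toggle_prime t d \<noteq> n div t"
    using assms(5,6) by metis+
  show "toggle_prime t d dvd n"
    using assms(1,2,4) by (rule toggle_prime_dvd)
qed

section \<open>Substituting q^d for q\<close>

lemma pcompose_power_left: "pcompose (p ^ k) r = pcompose p r ^ k"
  by (induction k) (simp_all add: pcompose_mult pcompose_1)

lemma subst_pow_monom: "subst_pow (monom 1 k) d = monom 1 (k * d)"
  unfolding subst_pow_def monom_altdef
  by (simp add: pcompose_power_left pcompose_pCons mult.commute flip: power_mult)

lemma subst_pow_mult: "subst_pow (p * q) d = subst_pow p d * subst_pow q d"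
  by (simp add: subst_pow_def pcompose_mult)

lemma subst_pow_diff: "subst_pow (p - q) d = subst_pow p d - subst_pow q d"
  by (simp add: subst_pow_def pcompose_diff)

lemma subst_pow_1 [simp]: "subst_pow 1 d = 1"
  by (simp add: subst_pow_def pcompose_1)

lemma subst_pow_prod: "subst_pow (prod f A) d = (\<Prod>i\<in>A. subst_pow (f i) d)"
  by (simp add: subst_pow_def pcompose_prod)

lemma subst_pow_subst_pow: "subst_pow (subst_pow p k) d = subst_pow p (k * d)"
  by (metis subst_pow_def pcompose_assoc subst_pow_monom)

lemma subst_pow_dvd: "p dvd q \<Longrightarrow> subst_pow p d dvd subst_pow q d"
  by (metis dvdE dvd_triv_left subst_pow_mult)

lemma X_minus_1_eq: "[:-1, 1:] = monom 1 1 - (1 :: int poly)"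
  by (simp add: monom_Suc one_pCons)

lemma subst_pow_X_minus_1: "subst_pow [:-1, 1:] d = monom 1 d - 1"
  by (simp add: X_minus_1_eq subst_pow_diff subst_pow_monom)

lemma degree_subst_pow: "d > 0 \<Longrightarrow> degree (subst_pow p d) = degree p * d"
  by (simp add: subst_pow_def degree_pcompose degree_monom_eq)

section \<open>q-integers\<close>

lemma qint_0 [simp]: "qint 0 = 0"
  by (simp add: qint_def)

lemma qint_Suc_0 [simp]: "qint (Suc 0) = 1"
  by (simp add: qint_def)

lemma qint_Suc_left: "qint (Suc n) = 1 + monom 1 1 * qint n"
proof -
  have "monom 1 1 * monom 1 i = (monom 1 (Suc i) :: int poly)" for i
    by (simp add: mult_monom)
  then show ?thesis
    by (simp only: qint_def sum.lessThan_Suc_shift sum_distrib_left monom_0 one_pCons[symmetric])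
qed

lemma X_minus_1_mult_qint: "[:-1, 1:] * qint n = monom 1 n - 1"
proof (induction n)
  case (Suc n)
  have "[:-1, 1:] * monom 1 n = monom 1 (Suc n) - (monom 1 n :: int poly)"
    by (simp add: monom_Suc algebra_simps)
  with Suc.IH show ?case
    by (simp add: qint_def distrib_left)
qed simp

lemma qint_eq_0_iff [simp]: "qint n = 0 \<longleftrightarrow> n = 0"
proof
  assume "qint n = 0"
  then have "monom 1 n = (1 :: int poly)"
    using X_minus_1_mult_qint[of n] by simp
  then show "n = 0"
    by (simp add: monom_eq_1_iff)
qed simp

lemma degree_qint: "degree (qint n) = n - 1"
proof (cases "n = 0")
  case False
  have "degree ([:-1, 1:] * qint n) = Suc (degree (qint n))"
    using False by (subst degree_mult_eq) auto
  then have "degree (monom 1 n - 1 :: int poly) = Suc (degree (qint n))"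
    by (simp only: X_minus_1_mult_qint)
  moreover have "degree (monom 1 n - 1 :: int poly) = n"
    using False
    by (metis degree_1 degree_monom_eq diff_conv_add_uminus degree_add_eq_left degree_minus
        neq0_conv one_neq_zero)
  ultimately show ?thesis
    by linarith
qed simp

lemma qint_mult: "qint (m * n) = subst_pow (qint m) n * qint n"
proof -
  have "[:-1, 1:] * (subst_pow (qint m) n * qint n) = subst_pow ([:-1, 1:] * qint m) n"
    by (simp only: subst_pow_mult subst_pow_X_minus_1 flip: X_minus_1_mult_qint) (simp only: ac_simps)
  also have "\<dots> = subst_pow (monom 1 m - 1) n"
    by (simp only: X_minus_1_mult_qint)
  also have "\<dots> = [:-1, 1:] * qint (m * n)"
    by (simp only: subst_pow_diff subst_pow_monom subst_pow_1 X_minus_1_mult_qint)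
  finally show ?thesis
    by (subst (asm) mult_left_cancel) auto
qed

lemma qint_dvd_qint_mult: "qint n dvd qint (m * n)"
  by (simp add: qint_mult)

lemma coprime_qint:
  assumes "coprime m n"
  shows "coprime (qint m) (qint n)"
proof (cases "m = 0")
  case True
  with assms have "n = 1"
    by simp
  with True show ?thesis
    by simp
next
  case False
  from bezout_nat[OF False] obtain x y where "m * x = n * y + gcd m n"
    by blast
  with assms have "m * x = Suc (n * y)"
    by simp
  then have "qint (x * m) = 1 + monom 1 1 * qint (y * n)"
    by (simp only: mult.commute[of x m] mult.commute[of y n] qint_Suc_left)
  then have one: "qint (x * m) - monom 1 1 * qint (y * n) = 1"
    by simp
  show ?thesis
  proof (rule coprimeI)
    fix c assume "c dvd qint m" "c dvd qint n"
    have "c dvd qint (x * m)"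
      using \<open>c dvd qint m\<close> qint_dvd_qint_mult by (rule dvd_trans)
    moreover have "c dvd qint (y * n)"
      using \<open>c dvd qint n\<close> qint_dvd_qint_mult by (rule dvd_trans)
    ultimately have "c dvd qint (x * m) - monom 1 1 * qint (y * n)"
      by simp
    then show "is_unit c"
      by (simp only: one)
  qed
qed

text \<open>[mn]_q = [m]_{q^n} [n]_q = [n]_{q^m} [m]_q, and [n]_q is coprime to [m]_q, so it divides
  [n]_{q^m}.\<close>
lemma qint_mult_dvd_subst_pow:
  assumes "coprime m n"
  shows "qint (m * n) dvd subst_pow (qint m) n * subst_pow (qint n) m"
proof -
  have "qint (m * n) = subst_pow (qint n) m * qint m"
    by (subst mult.commute) (rule qint_mult)
  moreover have "qint n dvd qint (m * n)"
    by (rule qint_dvd_qint_mult)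
  ultimately have "qint n dvd subst_pow (qint n) m * qint m"
    by simp
  then have "qint n dvd subst_pow (qint n) m"
    using coprime_qint[OF assms] by (simp add: coprime_dvd_mult_left_iff coprime_commute)
  then show ?thesis
    by (simp add: qint_mult mult_dvd_mono)
qed

lemma subst_pow_prod_prime_factors:
  "subst_pow (\<Prod>q\<in>prime_factors m. subst_pow (qint q) (m div q)) k =
    (\<Prod>q\<in>prime_factors m. subst_pow (qint q) (m * k div q))"
  unfolding subst_pow_prod subst_pow_subst_pow
  by (intro prod.cong refl) (simp add: in_prime_factors_iff dvd_div_mult)

lemma qint_dvd_prod_prime_factors:
  assumes "squarefree n"
  shows "qint n dvd (\<Prod>p\<in>prime_factors n. subst_pow (qint p) (n div p))"
  using assms
proof (induction n rule: less_induct)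
  case (less n)
  show ?case
  proof (cases "n = 1")
    case False
    have "n \<noteq> 0"
      using less.prems squarefree_nat_gt_0 by blast
    with False obtain p where p: "prime p" "p dvd n"
      using prime_factor_nat by blast
    define m where "m = n div p"
    have n_eq: "n = p * m"
      using p(2) by (simp add: m_def)
    have "\<not> p dvd m"
      unfolding m_def using less.prems p by (rule squarefree_not_dvd_div_prime)
    have "m \<noteq> 0"
      using \<open>n \<noteq> 0\<close> n_eq by auto
    have "squarefree m"
      using less.prems squarefree_mono[of m n] by (simp add: n_eq)
    have "m < n"
      using \<open>m \<noteq> 0\<close> n_eq p(1) prime_gt_1_nat by simp
    have "subst_pow (qint m) p dvd
        subst_pow (\<Prod>q\<in>prime_factors m. subst_pow (qint q) (m div q)) p"
      using less.IH[OF \<open>m < n\<close> \<open>squarefree m\<close>] by (rule subst_pow_dvd)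
    also have "\<dots> = (\<Prod>q\<in>prime_factors m. subst_pow (qint q) (n div q))"
      by (simp add: subst_pow_prod_prime_factors n_eq mult.commute[of p m])
    finally have "subst_pow (qint p) m * subst_pow (qint m) p dvd
        subst_pow (qint p) (n div p) * (\<Prod>q\<in>prime_factors m. subst_pow (qint q) (n div q))"
      by (simp add: m_def mult_dvd_mono)
    moreover have "qint n dvd subst_pow (qint p) m * subst_pow (qint m) p"
      using qint_mult_dvd_subst_pow[of p m] \<open>\<not> p dvd m\<close> p(1) n_eq
      by (simp add: prime_imp_coprime)
    ultimately have "qint n dvd
        subst_pow (qint p) (n div p) * (\<Prod>q\<in>prime_factors m. subst_pow (qint q) (n div q))"
      by (rule dvd_trans[rotated])
    moreover have "prime_factors n = insert p (prime_factors m)" "p \<notin> prime_factors m"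
      using \<open>m \<noteq> 0\<close> \<open>\<not> p dvd m\<close> p(1)
      by (auto simp: n_eq prime_factors_product prime_prime_factors in_prime_factors_iff)
    ultimately show ?thesis
      by simp
  qed simp
qed

lemma not_qint_dvd_subst_pow_qint:
  assumes "p > 1" "k > 1"
  shows "\<not> qint (p * k) dvd subst_pow (qint p) k"
proof
  assume dvd: "qint (p * k) dvd subst_pow (qint p) k"
  have "2 * k \<le> p * k"
    using assms by simp
  have "degree (subst_pow (qint p) k) = (p - 1) * k"
    using assms by (simp add: degree_subst_pow degree_qint)
  also have "\<dots> = p * k - k"
    by (simp add: diff_mult_distrib)
  finally have degree: "degree (subst_pow (qint p) k) = p * k - k" .
  with \<open>2 * k \<le> p * k\<close> assms have "degree (subst_pow (qint p) k) \<noteq> 0"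
    by linarith
  then have "subst_pow (qint p) k \<noteq> 0"
    by auto
  then have "p * k - 1 \<le> p * k - k"
    using dvd_imp_degree_le[OF dvd] degree by (simp add: degree_qint)
  with \<open>2 * k \<le> p * k\<close> assms show False
    by linarith
qed

lemma cyclotomic_prime:
  assumes "prime p"
  shows "cyclotomic p = qint p"
proof -
  have divisors: "d dvd p \<longleftrightarrow> d = 1 \<or> d = p" for d
    using assms prime_nat_iff by auto
  have "p \<noteq> 1"
    using assms by auto
  then have "{d. d dvd p \<and> moebius (p div d) = 1} = {p}"
    "{d. d dvd p \<and> moebius (p div d) = -1} = {1}"
    using assms by (auto simp: divisors moebius_prime)
  then have "cyclotomic p = (monom 1 p - 1) div [:-1, 1:]"
    by (simp add: cyclotomic_def X_minus_1_eq)
  also have "\<dots> = ([:-1, 1:] * qint p) div [:-1, 1:]"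
    by (simp only: X_minus_1_mult_qint)
  also have "\<dots> = qint p"
    by (rule nonzero_mult_div_cancel_left) simp
  finally show ?thesis .
qed

section \<open>Sequences built from a selected prime factor\<close>

locale prime_selection_seq =
  fixes a :: "nat \<Rightarrow> int poly" and sel :: "nat set \<Rightarrow> nat"
  assumes a_1: "a 1 = [:-1, 1:]"
    and sel_mem: "m > 1 \<Longrightarrow> sel (prime_factors m) \<in> prime_factors m"
    and a_eq: "m > 1 \<Longrightarrow>
      a m = subst_pow (qint (sel (prime_factors m))) (m div sel (prime_factors m))"
begin

definition factor :: "nat \<Rightarrow> nat \<Rightarrow> int poly" where
  "factor n d = subst_pow (a (n div d)) d"

lemma factor_eq:
  assumes "d dvd n" "d < n"
  shows "factor n d =
    subst_pow (qint (sel (prime_factors (n div d)))) (n div sel (prime_factors (n div d)))"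
proof -
  define m where "m = n div d"
  define p where "p = sel (prime_factors m)"
  have "d \<noteq> 0"
    using assms by auto
  then have n_eq: "n = m * d"
    using assms(1) by (simp add: m_def)
  with assms(2) have "m > 1"
    by (metis less_one mult_1 mult_eq_0_iff nat_neq_iff not_less_zero)
  then have "p dvd m"
    using sel_mem by (auto simp: p_def)
  have "factor n d = subst_pow (qint p) (m div p * d)"
    by (simp add: factor_def flip: m_def p_def) (simp add: a_eq[OF \<open>m > 1\<close>] p_def subst_pow_subst_pow)
  also have "m div p * d = n div p"
    using \<open>p dvd m\<close> by (simp add: n_eq div_mult_swap mult.commute)
  finally show ?thesis
    by (simp add: p_def m_def)
qed

lemma qint_dvd_factor_self:
  assumes "n > 0"
  shows "qint n dvd factor n n"
proof -
  have "factor n n = subst_pow (a 1) n"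
    using assms by (simp add: factor_def)
  also have "\<dots> = [:-1, 1:] * qint n"
    by (simp only: a_1 subst_pow_X_minus_1 X_minus_1_mult_qint)
  finally show ?thesis
    by (simp only: dvd_triv_right)
qed

lemma factor_div_prime:
  assumes "prime p" "p dvd n" "n \<noteq> 0"
  shows "factor n (n div p) = subst_pow (qint p) (n div p)"
proof -
  have "n div (n div p) = p"
    using assms(2,3) by (rule div_div_self_nat)
  moreover have "sel (prime_factors p) = p"
    using sel_mem[of p] assms(1) prime_gt_1_nat by (simp add: prime_prime_factors)
  moreover have "n div p < n"
    using assms prime_gt_1_nat by (simp add: div_less_dividend)
  moreover have "n div p dvd n"
    using assms(2) by (rule div_dvd_dividend_nat)
  ultimately show ?thesis
    using factor_eq[of "n div p" n] by simp
qed

lemma factor_toggle_prime: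
  assumes "prime p" "p dvd n" "d dvd n" "squarefree d" "d < n" "toggle_prime p d < n"
    and sel_eq: "\<And>e. \<not> p dvd e \<Longrightarrow> e * p dvd n \<Longrightarrow> e * p < n \<Longrightarrow>
      sel (prime_factors (n div e)) = sel (prime_factors (n div (e * p)))"
  shows "factor n (toggle_prime p d) = factor n d"
proof -
  have toggle_dvd: "toggle_prime p d dvd n"
    using assms(1-3) by (rule toggle_prime_dvd)
  from assms(1,4) have "sel (prime_factors (n div toggle_prime p d)) = sel (prime_factors (n div d))"
  proof (cases rule: toggle_prime_cases)
    case (1 e)
    then show ?thesis
      using sel_eq toggle_dvd assms(6) by simp
  next
    case (2 e)
    then show ?thesis
      using sel_eq assms(3,5) by simp
  qed
  then show ?thesis
    using factor_eq assms(3,5,6) toggle_dvd by simp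
qed

text \<open>If p^2 divides n, toggling p is a bijection between the two index sets which does not
  change the prime factors of n/d.\<close>
lemma prod_factor_moebius_eq:
  assumes "n > 0" "\<not> squarefree n"
  shows "(\<Prod>d\<in>{d. d dvd n \<and> moebius d = 1}. factor n d) =
    (\<Prod>d\<in>{d. d dvd n \<and> moebius d = -1}. factor n d)"
proof -
  obtain p where p: "prime p" "p ^ 2 dvd n"
    using assms squarefree_factorial_semiring[of n] by auto
  have "p dvd n"
    using p(2) dvd_trans[of p "p ^ 2" n] by simp
  have sel_eq: "sel (prime_factors (n div e)) = sel (prime_factors (n div (e * p)))"
    if "\<not> p dvd e" "e * p dvd n" for e
    using prime_factors_div_eq_if_square_dvd[OF p that] assms(1) by simp
  have less: "d < n" if "d dvd n" "squarefree d" for d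
    using that assms dvd_imp_le[of d n] le_neq_implies_less by blast
  have toggle: "toggle_prime p d dvd n" "moebius (toggle_prime p d) = - moebius d"
      "toggle_prime p (toggle_prime p d) = d" "factor n (toggle_prime p d) = factor n d"
    if "d dvd n" "moebius d \<noteq> 0" for d
  proof -
    have "squarefree d"
      using that(2) by (rule squarefree_if_moebius_neq_0)
    show "toggle_prime p d dvd n" "moebius (toggle_prime p d) = - moebius d"
      "toggle_prime p (toggle_prime p d) = d"
      using toggle_prime_dvd moebius_toggle_prime toggle_prime_toggle_prime
        p(1) \<open>p dvd n\<close> that(1) \<open>squarefree d\<close> by blast+
    then have "squarefree (toggle_prime p d)"
      using that(2) squarefree_if_moebius_neq_0 by fastforce
    then show "factor n (toggle_prime p d) = factor n d"
      using factor_toggle_prime[OF p(1) \<open>p dvd n\<close> that(1) \<open>squarefree d\<close>] sel_eq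
        less that(1) \<open>squarefree d\<close> \<open>toggle_prime p d dvd n\<close> by blast
  qed
  show ?thesis
    by (rule prod.reindex_bij_witness[where i = "toggle_prime p" and j = "toggle_prime p"])
      (auto simp: toggle)
qed

lemma qint_dvd_prod_factor_moebius:
  assumes "squarefree n" "n > 1" "\<epsilon> = 1 \<or> \<epsilon> = -1"
  shows "qint n dvd (\<Prod>d\<in>{d. d dvd n \<and> moebius d = \<epsilon>}. factor n d)"
proof -
  have finite: "finite {d. d dvd n \<and> moebius d = \<epsilon>}"
    using assms(2) by (simp add: finite_divisors_nat)
  consider "moebius n = \<epsilon>" | "moebius n = - \<epsilon>"
    using moebius_squarefree[OF assms(1)] assms(3) by auto
  then show ?thesis
  proof cases
    case 1
    have "qint n dvd factor n n"
      using assms(2) by (intro qint_dvd_factor_self) simp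
    also have "factor n n dvd (\<Prod>d\<in>{d. d dvd n \<and> moebius d = \<epsilon>}. factor n d)"
      using finite 1 by (intro dvd_prodI) auto
    finally show ?thesis .
  next
    case 2
    let ?D = "(\<lambda>p. n div p) ` prime_factors n"
    have "inj_on (\<lambda>p. n div p) (prime_factors n)"
      using assms(2) by (intro inj_on_inverseI[where g = "\<lambda>d. n div d"])
        (auto simp: in_prime_factors_iff div_div_self_nat)
    then have "(\<Prod>d\<in>?D. factor n d) = (\<Prod>p\<in>prime_factors n. subst_pow (qint p) (n div p))"
      using assms(2)
      by (simp add: prod.reindex) (auto intro!: prod.cong simp: in_prime_factors_iff factor_div_prime)
    then have "qint n dvd (\<Prod>d\<in>?D. factor n d)"
      using qint_dvd_prod_prime_factors[OF assms(1)] by simp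
    also have "\<dots> dvd (\<Prod>d\<in>{d. d dvd n \<and> moebius d = \<epsilon>}. factor n d)"
      using 2 assms(1) finite
      by (intro prod_dvd_prod_subset)
        (auto simp: in_prime_factors_iff moebius_div_prime div_dvd_dividend_nat)
    finally show ?thesis .
  qed
qed

theorem q_Euler_Gauss: "q_Euler_Gauss a"
  unfolding q_Euler_Gauss_def factor_def[symmetric]
proof (intro allI impI)
  fix n :: nat
  assume "n \<ge> 1"
  show "qint n dvd (\<Prod>d\<in>{d. d dvd n \<and> moebius d = 1}. factor n d) -
      (\<Prod>d\<in>{d. d dvd n \<and> moebius d = -1}. factor n d)"
  proof (cases "n = 1")
    case False
    with \<open>n \<ge> 1\<close> have "n > 1"
      by simp
    then show ?thesis
      using prod_factor_moebius_eq qint_dvd_prod_factor_moebius by (cases "squarefree n") auto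
  qed simp
qed

lemma sel_prime_factors_div_eq:
  assumes t: "prime t" "squarefree n" "e * t dvd n" "e * t < n"
    and sel_insert: "\<And>A. A \<subseteq> prime_factors n \<Longrightarrow> A \<noteq> {} \<Longrightarrow> t \<notin> A \<Longrightarrow> sel (insert t A) = sel A"
  shows "sel (prime_factors (n div e)) = sel (prime_factors (n div (e * t)))"
proof -
  define m where "m = n div (e * t)"
  have "n \<noteq> 0"
    using assms(2) squarefree_nat_gt_0 by blast
  have n_eq: "n = e * t * m"
    using assms(3) by (simp add: m_def)
  have "m > 1"
    using assms(4) \<open>n \<noteq> 0\<close> n_eq by (cases "m = 0 \<or> m = 1") auto
  have "squarefree (m * t)"
    using assms(2) squarefree_mono[of "m * t" n] by (simp add: n_eq)
  then have "t \<notin> prime_factors m"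
    using squarefree_not_dvd_div_prime[of "m * t" t] t(1) by auto
  moreover have "prime_factors m \<subseteq> prime_factors n"
    using \<open>n \<noteq> 0\<close> by (auto simp: n_eq in_prime_factors_iff)
  moreover have "prime_factors m \<noteq> {}"
    using \<open>m > 1\<close> by (rule prime_factors_nonempty)
  ultimately show ?thesis
    using prime_factors_div_eq_insert[OF t(1) assms(3) \<open>n \<noteq> 0\<close>] sel_insert by (simp add: m_def)
qed

text \<open>All divisors other than n and n/t cancel in pairs under toggling t, because the hypothesis
  on sel keeps t from being selected as long as another prime is present.\<close>
lemma q_Gauss_sum_eq:
  assumes t: "prime t" "t dvd n" and "squarefree n"
    and sel_insert: "\<And>A. A \<subseteq> prime_factors n \<Longrightarrow> A \<noteq> {} \<Longrightarrow> t \<notin> A \<Longrightarrow> sel (insert t A) = sel A"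
  shows "(\<Sum>d\<in>{d. d dvd n}. smult (moebius d) (factor n d)) =
    smult (moebius n) (factor n n) + smult (moebius (n div t)) (factor n (n div t))"
    (is "sum ?g _ = _")
proof -
  have "n \<noteq> 0"
    using \<open>squarefree n\<close> squarefree_nat_gt_0 by blast
  have "n div t \<noteq> n"
    using div_less_dividend[OF prime_gt_1_nat[OF t(1)], of n] \<open>n \<noteq> 0\<close> by simp
  let ?R = "{d. d dvd n} - {n, n div t}"
  have less: "d < n" if "d dvd n" "d \<noteq> n" for d
    using that \<open>n \<noteq> 0\<close> dvd_imp_le le_neq_implies_less by blast
  have "sum ?g ?R = 0"
  proof (rule sum_involution_eq_0[where h = "toggle_prime t"])
    fix d assume "d \<in> ?R"
    then have d: "d dvd n" "d \<noteq> n" "d \<noteq> n div t"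
      by auto
    have "squarefree d"
      using d(1) \<open>squarefree n\<close> by (rule squarefree_mono)
    show "toggle_prime t (toggle_prime t d) = d"
      using t(1) \<open>squarefree d\<close> by (rule toggle_prime_toggle_prime)
    show "toggle_prime t d \<in> ?R"
      using toggle_prime_other_divisor[OF t \<open>squarefree n\<close> d] by auto
    then have "factor n (toggle_prime t d) = factor n d"
      using factor_toggle_prime[OF t d(1) \<open>squarefree d\<close>] less d(1,2)
        sel_prime_factors_div_eq[OF t(1) \<open>squarefree n\<close> _ _ sel_insert] by simp
    then show "?g (toggle_prime t d) + ?g d = 0"
      using moebius_toggle_prime[OF t(1) \<open>squarefree d\<close>] by (simp flip: smult_add_left)
    show "toggle_prime t d \<noteq> d"
      using t(1) d(1) \<open>n \<noteq> 0\<close> by (intro toggle_prime_neq) auto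
  qed
  moreover have "sum ?g {d. d dvd n} = sum ?g ?R + sum ?g {n, n div t}"
    using t(2) \<open>n \<noteq> 0\<close>
    by (intro sum.subset_diff) (auto simp: div_dvd_dividend_nat finite_divisors_nat)
  ultimately show ?thesis
    using \<open>n div t \<noteq> n\<close> by simp
qed

lemma not_q_Gauss_at:
  assumes t: "t \<in> prime_factors n" and "squarefree n" "n > 1" "\<not> prime n"
    and sel_insert: "\<And>A. A \<subseteq> prime_factors n \<Longrightarrow> A \<noteq> {} \<Longrightarrow> t \<notin> A \<Longrightarrow> sel (insert t A) = sel A"
  shows "\<not> q_Gauss_at a n"
proof
  have "prime t" "t dvd n"
    using t by auto
  then obtain k where n_eq: "n = t * k"
    by blast
  have "k \<noteq> 0" "k \<noteq> 1"
    using assms(3,4) \<open>prime t\<close> n_eq by auto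
  then have "k > 1"
    by simp
  have k_eq: "n div t = k"
    using \<open>prime t\<close> n_eq by simp
  assume "q_Gauss_at a n"
  then have "qint n dvd smult (moebius n) (factor n n) + smult (moebius k) (factor n k)"
    using q_Gauss_sum_eq[OF \<open>prime t\<close> \<open>t dvd n\<close> \<open>squarefree n\<close> sel_insert]
    by (simp add: q_Gauss_at_def k_eq flip: factor_def)
  moreover have "qint n dvd smult (moebius n) (factor n n)"
    using assms(3) by (intro dvd_smult qint_dvd_factor_self) simp
  ultimately have "qint n dvd smult (moebius k) (factor n k)"
    by (simp add: dvd_add_right_iff)
  moreover have "moebius k = 1 \<or> moebius k = -1"
    using moebius_div_prime[OF \<open>squarefree n\<close> \<open>prime t\<close> \<open>t dvd n\<close>]
      moebius_squarefree[OF \<open>squarefree n\<close>] by (auto simp: k_eq)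
  moreover have "factor n k = subst_pow (qint t) k"
    using factor_div_prime[OF \<open>prime t\<close> \<open>t dvd n\<close>] assms(3) by (simp add: k_eq)
  ultimately have "qint (t * k) dvd subst_pow (qint t) k"
    by (auto simp flip: n_eq)
  with \<open>prime t\<close> \<open>k > 1\<close> show False
    using not_qint_dvd_subst_pow_qint prime_gt_1_nat by blast
qed

end

section \<open>The sequences G and S\<close>

lemma Max_insert_Min:
  assumes "finite B" "A \<subseteq> B" "A \<noteq> {}"
  shows "Max (insert (Min B) A) = Max A"
proof -
  have "finite A"
    using assms(1,2) by (rule finite_subset[rotated])
  with assms have "Min B \<le> Max A"
    using Min_le Max_ge by (meson order_trans subset_iff ex_in_conv)
  with \<open>finite A\<close> assms(3) show ?thesis
    by (simp add: max_absorb2)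
qed

lemma Min_insert_Max:
  assumes "finite B" "A \<subseteq> B" "A \<noteq> {}"
  shows "Min (insert (Max B) A) = Min A"
proof -
  have "finite A"
    using assms(1,2) by (rule finite_subset[rotated])
  with assms have "Min A \<le> Max B"
    using Min_le Max_ge by (meson order_trans subset_iff ex_in_conv)
  with \<open>finite A\<close> assms(3) show ?thesis
    by (simp add: min_absorb2)
qed

interpretation G_seq: prime_selection_seq G_seq Max
proof
  show "G_seq 1 = [:-1, 1:]"
    by (simp add: G_seq_def)
  fix m :: nat
  assume "m > 1"
  then show max_mem: "Max (prime_factors m) \<in> prime_factors m"
    by (intro Max_in prime_factors_nonempty) auto
  show "G_seq m = subst_pow (qint (Max (prime_factors m))) (m div Max (prime_factors m))"
    using \<open>m > 1\<close> cyclotomic_prime[OF in_prime_factors_imp_prime[OF max_mem]]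
    by (simp add: G_seq_def)
qed

interpretation S_seq: prime_selection_seq S_seq Min
proof
  show "S_seq 1 = [:-1, 1:]"
    by (simp add: S_seq_def)
  fix m :: nat
  assume "m > 1"
  then show min_mem: "Min (prime_factors m) \<in> prime_factors m"
    by (intro Min_in prime_factors_nonempty) auto
  show "S_seq m = subst_pow (qint (Min (prime_factors m))) (m div Min (prime_factors m))"
    using \<open>m > 1\<close> cyclotomic_prime[OF in_prime_factors_imp_prime[OF min_mem]]
    by (simp add: S_seq_def)
qed

theorem theorem10:
  shows "q_Euler_Gauss G_seq \<and> q_Euler_Gauss S_seq \<and>
         (\<forall>n::nat. n > 1 \<and> \<not> prime n \<and> squarefree n \<longrightarrow>
            \<not> q_Gauss_at G_seq n \<and> \<not> q_Gauss_at S_seq n)"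
proof (intro conjI allI impI)
  show "q_Euler_Gauss G_seq" "q_Euler_Gauss S_seq"
    by (rule G_seq.q_Euler_Gauss, rule S_seq.q_Euler_Gauss)
next
  fix n :: nat
  assume n: "n > 1 \<and> \<not> prime n \<and> squarefree n"
  then have min_mem: "Min (prime_factors n) \<in> prime_factors n"
    and max_mem: "Max (prime_factors n) \<in> prime_factors n"
    by (intro Min_in Max_in prime_factors_nonempty; simp)+
  show "\<not> q_Gauss_at G_seq n"
    using n by (intro G_seq.not_q_Gauss_at[OF min_mem]) (auto simp: Max_insert_Min)
  show "\<not> q_Gauss_at S_seq n"
    using n by (intro S_seq.not_q_Gauss_at[OF max_mem]) (auto simp: Min_insert_Max)
qed

end
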